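(* Let $D=(V,A)$ be a directed graph on $n$ vertices with distinct vertices $s,t$, let $M>0$, and let $\mathbf y:V\to\mathbb R$ satisfy $|\mathbf y(u)-\mathbf y(v)|\le M$ for all $u,v\in V$. Define the energy of an arc $(u,v)$ as $\mathcal E(u,v)=\int_{\mathbf y(v)-\mathbf y(u)}^{M}\frac{1}{\max\{x,0\}+1}\,dx$, and the total energy of $D$ as $\sum_{(u,v)\in A}\mathcal E(u,v)$. Let $D'$ be obtained from $D$ by reversing every arc of a simple directed path from $s$ to $t$ in $D$ (with $\mathbf y$ unchanged). Then the total energy of $D'$ exceeds the total energy of $D$ by at most $\mathbf y(t)-\mathbf y(s)+(n-1)\ln(M+1)$. *)

theory Defs
  imports "HOL-Analysis.Analysis"
begin

definition arc_energy :: "('a \<Rightarrow> real) \<Rightarrow> real \<Rightarrow> 'a \<times> 'a \<Rightarrow> real" where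
  "arc_energy y M e = integral {y (snd e) - y (fst e) .. M} (\<lambda>x. 1 / (max x 0 + 1))"

definition total_energy :: "('a \<Rightarrow> real) \<Rightarrow> real \<Rightarrow> ('a \<times> 'a) set \<Rightarrow> real" where
  "total_energy y M A = (\<Sum>e\<in>A. arc_energy y M e)"

definition is_simple_path :: "'a set \<Rightarrow> ('a \<times> 'a) set \<Rightarrow> 'a \<Rightarrow> 'a \<Rightarrow> 'a list \<Rightarrow> bool" where
  "is_simple_path V A s t p \<longleftrightarrow> p \<noteq> [] \<and> hd p = s \<and> last p = t \<and> distinct p \<and> set p \<subseteq> V
     \<and> (\<forall>i. Suc i < length p \<longrightarrow> (p ! i, p ! Suc i) \<in> A)"

definition path_arcs :: "'a list \<Rightarrow> ('a \<times> 'a) set" where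
  "path_arcs p = set (zip p (tl p))"

definition reverse_path :: "('a \<times> 'a) set \<Rightarrow> 'a list \<Rightarrow> ('a \<times> 'a) set" where
  "reverse_path A p = (A - path_arcs p) \<union> {(v, u) | u v. (u, v) \<in> path_arcs p}"

end

theory Submission
  imports Defs
begin

text \<open>The integrand has the antiderivative \<open>F x = min x 0 + ln (1 + max x 0)\<close>, so an arc
  of potential difference \<open>d\<close> has energy \<open>F M - F d\<close>, and reversing it costs
  \<open>F d - F (-d) \<le> d + ln (1 + M)\<close>. Summed over the path the terms \<open>d\<close> telescope to
  \<open>y t - y s\<close>, and a simple path has at most \<open>n - 1\<close> arcs. Reversed arcs that were already
  present are counted only once in the new arc set, which can only lower its energy because
  all energies are nonnegative.\<close>

definition energy_antideriv :: "real \<Rightarrow> real" where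
  "energy_antideriv x = min x 0 + ln (1 + max x 0)"

lemma energy_antideriv_has_vector_derivative:
  assumes "x \<noteq> 0"
  shows "(energy_antideriv has_vector_derivative 1 / (max x 0 + 1)) (at x)"
proof (cases "x < 0")
  case True
  have "(energy_antideriv has_field_derivative 1) (at x)"
  proof (rule has_field_derivative_transform_within_open[where f = "\<lambda>x. x" and S = "{..<0}"])
    show "\<And>z. z \<in> {..<0} \<Longrightarrow> z = energy_antideriv z"
      by (simp add: energy_antideriv_def)
  qed (use True in auto)
  with True show ?thesis
    by (simp add: has_real_derivative_iff_has_vector_derivative)
next
  case False
  with assms have "x > 0" by simp
  have "(energy_antideriv has_field_derivative 1 / (1 + x)) (at x)"
  proof (rule has_field_derivative_transform_within_open[where f = "\<lambda>x. ln (1 + x)" and S = "{0<..}"])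
    show "((\<lambda>x. ln (1 + x)) has_field_derivative 1 / (1 + x)) (at x)"
      using \<open>x > 0\<close> by (auto intro!: derivative_eq_intros)
    show "\<And>z. z \<in> {0<..} \<Longrightarrow> ln (1 + z) = energy_antideriv z"
      by (simp add: energy_antideriv_def)
  qed (use \<open>x > 0\<close> in auto)
  with \<open>x > 0\<close> show ?thesis
    by (simp add: has_real_derivative_iff_has_vector_derivative add.commute)
qed

lemma integral_energy_integrand:
  assumes "a \<le> b"
  shows "integral {a..b} (\<lambda>x. 1 / (max x 0 + 1)) = energy_antideriv b - energy_antideriv a"
proof (rule integral_unique, rule fundamental_theorem_of_calculus_interior_strong[where S = "{0}"])
  show "continuous_on {a..b} energy_antideriv"
    unfolding energy_antideriv_def by (intro continuous_intros) auto
qed (use assms energy_antideriv_has_vector_derivative in auto)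

lemma energy_antideriv_mono: "a \<le> b \<Longrightarrow> energy_antideriv a \<le> energy_antideriv b"
  unfolding energy_antideriv_def by (intro add_mono) (auto simp: min_def max_def)

lemma energy_antideriv_minus_le:
  fixes d M :: real
  assumes "d \<le> M" and "0 \<le> M"
  shows "energy_antideriv d - energy_antideriv (- d) \<le> d + ln (1 + M)"
proof (cases "d \<ge> 0")
  case True
  then have "energy_antideriv d - energy_antideriv (- d) = d + ln (1 + d)"
    by (simp add: energy_antideriv_def)
  with True assms show ?thesis by simp
next
  case False
  then have "energy_antideriv d - energy_antideriv (- d) = d - ln (1 - d)"
    by (simp add: energy_antideriv_def)
  moreover have "0 \<le> ln (1 - d)" and "0 \<le> ln (1 + M)"
    using False assms by simp_all
  ultimately show ?thesis by simp
qed

lemma arc_energy_eq: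
  assumes "y v - y u \<le> M"
  shows "arc_energy y M (u, v) = energy_antideriv M - energy_antideriv (y v - y u)"
  unfolding arc_energy_def using integral_energy_integrand[OF assms] by simp

lemma arc_energy_nonneg:
  assumes "y v - y u \<le> M"
  shows "0 \<le> arc_energy y M (u, v)"
  using arc_energy_eq[of y v u M] energy_antideriv_mono[of "y v - y u" M] assms by simp

lemma arc_energy_reverse_le:
  assumes "\<bar>y v - y u\<bar> \<le> M" and "0 \<le> M"
  shows "arc_energy y M (v, u) - arc_energy y M (u, v) \<le> y v - y u + ln (1 + M)"
proof -
  have "arc_energy y M (v, u) - arc_energy y M (u, v)
      = energy_antideriv (y v - y u) - energy_antideriv (- (y v - y u))"
    using assms(1) arc_energy_eq[of y u v M] arc_energy_eq[of y v u M] by simp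
  also have "\<dots> \<le> y v - y u + ln (1 + M)"
    using assms by (intro energy_antideriv_minus_le) auto
  finally show ?thesis .
qed

lemma sum_Diff_Un_image_le:
  fixes E :: "'a \<Rightarrow> 'b::ordered_ab_group_add"
  assumes "finite A" and "P \<subseteq> A" and "\<And>x. x \<in> P \<Longrightarrow> 0 \<le> E (f x)"
  shows "sum E ((A - P) \<union> f ` P) - sum E A \<le> (\<Sum>x\<in>P. E (f x) - E x)"
proof -
  have finP: "finite P" using assms(1,2) finite_subset by blast
  have "sum E ((A - P) \<union> f ` P) = sum E (A - P) + sum E (f ` P) - sum E ((A - P) \<inter> f ` P)"
    using assms(1) finP by (simp add: sum_Un)
  also have "\<dots> \<le> sum E (A - P) + sum E (f ` P)"
    using assms(3) by (auto intro: sum_nonneg)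
  also have "\<dots> \<le> sum E (A - P) + (\<Sum>x\<in>P. E (f x))"
    using sum_image_le[OF finP, of E f] assms(3) by (simp add: o_def)
  finally have "sum E ((A - P) \<union> f ` P) - sum E A
      \<le> sum E (A - P) + (\<Sum>x\<in>P. E (f x)) - sum E A"
    by (rule diff_right_mono)
  also have "\<dots> = (\<Sum>x\<in>P. E (f x) - E x)"
    using sum.subset_diff[OF assms(2,1), of E] by (simp add: sum_subtractf algebra_simps)
  finally show ?thesis .
qed

lemma reverse_path_eq: "reverse_path A p = (A - path_arcs p) \<union> prod.swap ` path_arcs p"
  unfolding reverse_path_def by force

lemma path_arcs_subset:
  assumes "is_simple_path V A s t p"
  shows "path_arcs p \<subseteq> A"
proof
  fix e assume "e \<in> path_arcs p"
  then obtain i where "i < min (length p) (length (tl p))" and "e = (p ! i, tl p ! i)"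
    unfolding path_arcs_def set_zip by auto
  with assms show "e \<in> A"
    by (auto simp: is_simple_path_def nth_tl)
qed

lemma card_path_arcs: "distinct p \<Longrightarrow> card (path_arcs p) = length p - 1"
  unfolding path_arcs_def by (simp add: distinct_card distinct_zipI1)

lemma sum_list_zip_tl_telescope:
  fixes g :: "'a \<Rightarrow> 'b::ab_group_add"
  shows "p \<noteq> [] \<Longrightarrow> (\<Sum>(u, v)\<leftarrow>zip p (tl p). g v - g u) = g (last p) - g (hd p)"
proof (induction p)
  case (Cons a q)
  then show ?case by (cases q) auto
qed simp

lemma sum_path_arcs_telescope:
  fixes g :: "'a \<Rightarrow> 'b::ab_group_add"
  assumes "distinct p" and "p \<noteq> []"
  shows "(\<Sum>(u, v)\<in>path_arcs p. g v - g u) = g (last p) - g (hd p)"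
  using sum_list_zip_tl_telescope[OF assms(2), of g] assms(1)
  unfolding path_arcs_def by (simp add: sum_list_distinct_conv_sum_set distinct_zipI1)

theorem lemma3p7:
  fixes V :: "'a set" and A :: "('a \<times> 'a) set" and s t :: 'a
    and y :: "'a \<Rightarrow> real" and M :: real and p :: "'a list"
  assumes "finite V" and "A \<subseteq> V \<times> V"
    and "s \<in> V" and "t \<in> V" and "s \<noteq> t"
    and "M > 0"
    and "\<And>u v. u \<in> V \<Longrightarrow> v \<in> V \<Longrightarrow> \<bar>y u - y v\<bar> \<le> M"
    and "is_simple_path V A s t p"
  shows "total_energy y M (reverse_path A p) - total_energy y M A
           \<le> y t - y s + (real (card V) - 1) * ln (M + 1)"
proof -
  let ?E = "arc_energy y M" and ?P = "path_arcs p"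
  have path: "p \<noteq> []" "hd p = s" "last p = t" "distinct p" "set p \<subseteq> V"
    using assms(8) by (auto simp: is_simple_path_def)
  have PV: "?P \<subseteq> V \<times> V"
    using path_arcs_subset[OF assms(8)] assms(2) by blast
  have "total_energy y M (reverse_path A p) - total_energy y M A
      \<le> (\<Sum>e\<in>?P. ?E (prod.swap e) - ?E e)"
    unfolding total_energy_def reverse_path_eq
  proof (rule sum_Diff_Un_image_le)
    show "finite A" using assms(1,2) finite_subset by blast
    show "\<And>e. e \<in> ?P \<Longrightarrow> 0 \<le> ?E (prod.swap e)"
      using PV assms(7) by (force intro: arc_energy_nonneg)
  qed (rule path_arcs_subset[OF assms(8)])
  also have "\<dots> \<le> (\<Sum>(u, v)\<in>?P. y v - y u + ln (1 + M))"
    using PV assms(6,7) by (intro sum_mono) (force intro: arc_energy_reverse_le)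
  also have "\<dots> = y t - y s + real (length p - 1) * ln (1 + M)"
    using path by (simp add: sum.distrib split_def sum_path_arcs_telescope[unfolded split_def]
        card_path_arcs)
  also have "\<dots> \<le> y t - y s + (real (card V) - 1) * ln (M + 1)"
  proof -
    have "length p \<le> card V"
      using path card_mono[OF assms(1) path(5)] distinct_card[OF path(4)] by simp
    with path(1) assms(6) show ?thesis
      by (cases p) (auto simp: add.commute intro!: mult_right_mono)
  qed
  finally show ?thesis .
qed

end
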